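(* Let $n\ge 2$ and let $\mathbb{A}=(A_{ij})_{i,j=1}^n$ be an operator matrix as described in the context. Let $T=(T_1,\ldots,T_{n-1}):\mathcal{D}(T_1)\times\cdots\times\mathcal{D}(T_{n-1})\to X_n$, $T(x_1,\dots,x_{n-1})=\sum_j T_jx_j$, where each $T_j:\mathcal{D}(T_j)\subset X_j\to X_n$ is linear and relatively $A_{jj}$-bounded. Assume moreover that $\mathbb{A}_k$ is closed for $k=2,\ldots,n$. If $\sigma(A_{kk})\cup\sigma(\mathbb{A}_k)\ne\mathbb{C}$ for all $k\in\{2,\ldots,n-2\}$, then $T(\lambda-\mathbb{A}_{n-1})^{-1}$ is bounded for every $\lambda\notin\sigma(A_{n-1,n-1})\cup\sigma(\mathbb{A}_{n-1})$. In particular, $T$ is relatively $\mathbb{A}_{n-1}$-bounded if $\sigma(A_{kk})\cup\sigma(\mathbb{A}_k)\ne\mathbb{C}$ for all $k\in\{2,\ldots,n-1\}$.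
   Context: Let $X_1,\ldots,X_n$ be complex Banach spaces and $X=X_1\times\cdots\times X_n$ with norm $\|x\|=\sum_i\|x_i\|_{X_i}$. For $i,j\in\{1,\ldots,n\}$, $A_{ij}:\mathcal{D}(A_{ij})\subset X_j\to X_i$ are linear operators with $A_{ii}$ closed and, for $i\ne j$, $A_{ij}$ relatively $A_{jj}$-bounded (i.e. $\mathcal{D}(A_{jj})\subset\mathcal{D}(A_{ij})$ and there are $\alpha,\beta\ge0$ with $\|A_{ij}x\|\le\alpha\|x\|+\beta\|A_{jj}x\|$ for $x\in\mathcal{D}(A_{jj})$). The operator matrix $\mathbb{A}=(A_{ij})$ acts on $\mathcal{D}(\mathbb{A})=\mathcal{D}(A_{11})\times\cdots\times\mathcal{D}(A_{nn})$ by $(\mathbb{A}x)_i=\sum_jA_{ij}x_j$. For $1\le k\le n$, $\mathbb{A}_k:=(A_{ij})_{i,j=1}^k$ is the upper-left block acting on $X_1\times\cdots\times X_k$ with domain $\mathcal{D}(A_{11})\times\cdots\times\mathcal{D}(A_{kk})$. For a linear operator $S$ on a Banach space $Y$, $\sigma(S)$ is the set of $\lambda$ for which $\lambda-S:\mathcal{D}(S)\to Y$ is not bijective with bounded inverse. Relative boundedness of an operator with respect to a (block) operator is defined analogously. *)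

theory Defs
  imports "HOL-Analysis.Analysis"
begin

text \<open>The Banach spaces X_1,...,X_n are modelled as closed complex-linear
subspaces X i (i = 1..n) of one complex Banach space 'a (every finite family of Banach
spaces embeds isometrically as closed subspaces into, e.g., their l1-sum, so this is no
loss of generality). A linear operator is a pair (domain set, map on the ambient type).
Elements of X_1 x ... x X_k are functions x :: nat \<Rightarrow> 'a with x i \<in> X i for i in {1..k}
and x i = 0 otherwise; the norm is the sum of the component norms.\<close>

class complex_normed_vector = real_normed_vector +
  fixes scaleC :: "complex \<Rightarrow> 'a \<Rightarrow> 'a"
  assumes scaleC_add_right: "scaleC a (x + y) = scaleC a x + scaleC a y"
    and scaleC_add_left: "scaleC (a + b) x = scaleC a x + scaleC b x"
    and scaleC_scaleC: "scaleC a (scaleC b x) = scaleC (a * b) x"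
    and scaleC_one: "scaleC 1 x = x"
    and scaleC_of_real: "scaleC (of_real r) x = scaleR r x"
    and norm_scaleC: "norm (scaleC a x) = cmod a * norm x"

definition csubspace :: "'a::complex_normed_vector set \<Rightarrow> bool" where
  "csubspace S \<longleftrightarrow> 0 \<in> S \<and> (\<forall>x\<in>S. \<forall>y\<in>S. x + y \<in> S) \<and> (\<forall>c. \<forall>x\<in>S. scaleC c x \<in> S)"

definition banach_subspace :: "'a::{complex_normed_vector,banach} set \<Rightarrow> bool" where
  "banach_subspace S \<longleftrightarrow> csubspace S \<and> closed S"

definition lin_op :: "'a::complex_normed_vector set \<Rightarrow> 'a set \<Rightarrow> 'a set \<Rightarrow> ('a \<Rightarrow> 'a) \<Rightarrow> bool" where
  "lin_op Y Z D f \<longleftrightarrow> csubspace D \<and> D \<subseteq> Y \<and> f ` D \<subseteq> Z \<and>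
     (\<forall>x\<in>D. \<forall>y\<in>D. f (x + y) = f x + f y) \<and> (\<forall>c. \<forall>x\<in>D. f (scaleC c x) = scaleC c (f x))"

definition closed_op :: "'a::real_normed_vector set \<Rightarrow> ('a \<Rightarrow> 'a) \<Rightarrow> bool" where
  "closed_op D f \<longleftrightarrow> closed {(x, f x) | x. x \<in> D}"

definition rel_bounded_gen :: "('v \<Rightarrow> real) \<Rightarrow> ('w \<Rightarrow> real) \<Rightarrow> 'v set \<Rightarrow> ('v \<Rightarrow> 'w) \<Rightarrow> 'v set \<Rightarrow> ('v \<Rightarrow> 'v) \<Rightarrow> bool" where
  "rel_bounded_gen Nx Nf Df f Dg g \<longleftrightarrow> Dg \<subseteq> Df \<and>
     (\<exists>\<alpha> \<beta>. \<alpha> \<ge> 0 \<and> \<beta> \<ge> 0 \<and> (\<forall>x\<in>Dg. Nf (f x) \<le> \<alpha> * Nx x + \<beta> * Nx (g x)))"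

definition resolvent_ok :: "'v set \<Rightarrow> ('v \<Rightarrow> real) \<Rightarrow> 'v set \<Rightarrow> ('v \<Rightarrow> 'v) \<Rightarrow> bool" where
  "resolvent_ok Y N D g \<longleftrightarrow> bij_betw g D Y \<and> (\<exists>C. \<forall>y\<in>Y. N (the_inv_into D g y) \<le> C * N y)"

definition spec :: "'a::complex_normed_vector set \<Rightarrow> 'a set \<Rightarrow> ('a \<Rightarrow> 'a) \<Rightarrow> complex set" where
  "spec Y D f = {l. \<not> resolvent_ok Y norm D (\<lambda>x. scaleC l x - f x)}"

definition PS :: "(nat \<Rightarrow> 'a::zero set) \<Rightarrow> nat \<Rightarrow> (nat \<Rightarrow> 'a) set" where
  "PS X k = {x. \<forall>i. (i \<in> {1..k} \<longrightarrow> x i \<in> X i) \<and> (i \<notin> {1..k} \<longrightarrow> x i = 0)}"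

definition PN :: "nat \<Rightarrow> (nat \<Rightarrow> 'a::real_normed_vector) \<Rightarrow> real" where
  "PN k x = (\<Sum>i=1..k. norm (x i))"

definition BD :: "(nat \<Rightarrow> nat \<Rightarrow> 'a::zero set) \<Rightarrow> nat \<Rightarrow> (nat \<Rightarrow> 'a) set" where
  "BD DA k = PS (\<lambda>i. DA i i) k"

text \<open>Action of the upper-left k x k block A_k.\<close>
definition BA :: "(nat \<Rightarrow> nat \<Rightarrow> 'a \<Rightarrow> 'a::comm_monoid_add) \<Rightarrow> nat \<Rightarrow> (nat \<Rightarrow> 'a) \<Rightarrow> nat \<Rightarrow> 'a" where
  "BA A k x i = (if i \<in> {1..k} then (\<Sum>j=1..k. A i j (x j)) else 0)"

definition block_closed :: "(nat \<Rightarrow> 'a::real_normed_vector set) \<Rightarrow> (nat \<Rightarrow> nat \<Rightarrow> 'a set) \<Rightarrow> (nat \<Rightarrow> nat \<Rightarrow> 'a \<Rightarrow> 'a) \<Rightarrow> nat \<Rightarrow> bool" where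
  "block_closed X DA A k \<longleftrightarrow>
     (\<forall>xs x y. (\<forall>m. xs m \<in> BD DA k) \<and> x \<in> PS X k \<and> y \<in> PS X k \<and>
        (\<lambda>m. PN k (\<lambda>i. xs m i - x i)) \<longlonglongrightarrow> 0 \<and>
        (\<lambda>m. PN k (\<lambda>i. BA A k (xs m) i - y i)) \<longlonglongrightarrow> 0
      \<longrightarrow> x \<in> BD DA k \<and> BA A k x = y)"

definition block_spec :: "(nat \<Rightarrow> 'a::complex_normed_vector set) \<Rightarrow> (nat \<Rightarrow> nat \<Rightarrow> 'a set) \<Rightarrow> (nat \<Rightarrow> nat \<Rightarrow> 'a \<Rightarrow> 'a) \<Rightarrow> nat \<Rightarrow> complex set" where
  "block_spec X DA A k = {l. \<not> resolvent_ok (PS X k) (PN k) (BD DA k) (\<lambda>x i. scaleC l (x i) - BA A k x i)}"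

definition rowT :: "(nat \<Rightarrow> 'a \<Rightarrow> 'a::comm_monoid_add) \<Rightarrow> nat \<Rightarrow> (nat \<Rightarrow> 'a) \<Rightarrow> 'a" where
  "rowT T m x = (\<Sum>j=1..m. T j (x j))"

end

(*
  Write k = n - 1 and D = D(A_11) x ... x D(A_kk). On D consider the graph norm of the block
  operator matrix A_k and the graph norm of its diagonal part diag(A_11, ..., A_kk). Both make D
  complete: the first because A_k is closed, the second because every A_ii is closed. The
  relative boundedness of the off-diagonal entries bounds the first norm by the second, so by the
  open mapping argument (Baire category plus a geometric series) the two norms are equivalent.
  Since each T_j is relatively A_jj-bounded, T is bounded for the diagonal graph norm, hence
  relatively A_k-bounded, and composing with the bounded resolvent of A_k bounds
  T (lambda - A_k)^-1.
*)

theory Submission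
  imports Defs "HOL-Library.Function_Algebras"
begin

section \<open>Complete norms on a subspace\<close>

\<comment> \<open>Pointwise scaling makes tuples \<open>nat \<Rightarrow> 'a\<close> a real vector space, so that the product domains are subspaces.\<close>
instantiation "fun" :: (type, real_vector) real_vector
begin

definition scaleR_fun :: "real \<Rightarrow> ('a \<Rightarrow> 'b) \<Rightarrow> 'a \<Rightarrow> 'b" where
  "scaleR_fun c f = (\<lambda>x. c *\<^sub>R f x)"

instance
  by standard (simp_all add: scaleR_fun_def fun_eq_iff scaleR_add_right scaleR_add_left)

end

lemma scaleR_fun_apply [simp]: "(c *\<^sub>R f) x = c *\<^sub>R f x"
  by (simp add: scaleR_fun_def)

definition seminorm_on :: "'v::real_vector set \<Rightarrow> ('v \<Rightarrow> real) \<Rightarrow> bool" where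
  "seminorm_on D N \<longleftrightarrow> (\<forall>x\<in>D. 0 \<le> N x) \<and> (\<forall>x\<in>D. \<forall>y\<in>D. N (x + y) \<le> N x + N y) \<and>
     (\<forall>c. \<forall>x\<in>D. N (c *\<^sub>R x) = \<bar>c\<bar> * N x)"

definition Cauchy_wrt :: "('v::ab_group_add \<Rightarrow> real) \<Rightarrow> (nat \<Rightarrow> 'v) \<Rightarrow> bool" where
  "Cauchy_wrt N f \<longleftrightarrow> (\<forall>e>0. \<exists>M. \<forall>m\<ge>M. \<forall>k\<ge>M. N (f m - f k) < e)"

definition complete_wrt :: "'v::ab_group_add set \<Rightarrow> ('v \<Rightarrow> real) \<Rightarrow> bool" where
  "complete_wrt D N \<longleftrightarrow> (\<forall>f. range f \<subseteq> D \<longrightarrow> Cauchy_wrt N f \<longrightarrow> (\<exists>x\<in>D. (\<lambda>m. N (f m - x)) \<longlonglongrightarrow> 0))"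

lemma seminorm_onD:
  assumes "seminorm_on D N"
  shows seminorm_on_nonneg: "x \<in> D \<Longrightarrow> 0 \<le> N x"
    and seminorm_on_triangle: "x \<in> D \<Longrightarrow> y \<in> D \<Longrightarrow> N (x + y) \<le> N x + N y"
    and seminorm_on_scaleR: "x \<in> D \<Longrightarrow> N (c *\<^sub>R x) = \<bar>c\<bar> * N x"
  using assms by (auto simp: seminorm_on_def)

context
  fixes D :: "'v::real_vector set" and N :: "'v \<Rightarrow> real"
  assumes D: "subspace D" and N: "seminorm_on D N"
begin

lemma seminorm_on_zero: "N 0 = 0"
  using seminorm_on_scaleR[OF N real_vector.subspace_0[OF D], of 0] by simp

lemma seminorm_on_minus_commute:
  assumes "x \<in> D" "y \<in> D"
  shows "N (x - y) = N (y - x)"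
  using seminorm_on_scaleR[OF N real_vector.subspace_diff[OF D assms(2,1)], of "-1"] by simp

lemma seminorm_on_diff_le:
  assumes "x \<in> D" "y \<in> D"
  shows "N (x - y) \<le> N x + N y"
proof -
  have "N (x + (-1) *\<^sub>R y) \<le> N x + N ((-1) *\<^sub>R y)"
    using assms D by (intro seminorm_on_triangle[OF N]) (auto intro: real_vector.subspace_neg)
  then show ?thesis
    using seminorm_on_scaleR[OF N assms(2), of "-1"] by simp
qed

lemma seminorm_on_sum_le:
  assumes "\<And>i. i \<in> I \<Longrightarrow> f i \<in> D"
  shows "N (\<Sum>i\<in>I. f i) \<le> (\<Sum>i\<in>I. N (f i))"
  using assms
proof (induction I rule: infinite_finite_induct)
  case (insert i I)
  have "N (f i + sum f I) \<le> N (f i) + N (sum f I)"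
    using insert.prems by (intro seminorm_on_triangle[OF N] real_vector.subspace_sum[OF D]) auto
  then show ?case using insert by simp
qed (simp_all add: seminorm_on_zero)

end

\<comment> \<open>Set to 0 off \<open>D\<close>, because \<open>Metric_space\<close> demands nonnegativity and symmetry on the whole type.\<close>
definition seminorm_dist :: "'v::real_vector set \<Rightarrow> ('v \<Rightarrow> real) \<Rightarrow> 'v \<Rightarrow> 'v \<Rightarrow> real" where
  "seminorm_dist D N x y = (if x \<in> D \<and> y \<in> D then N (x - y) else 0)"

lemma Metric_space_seminorm_dist:
  assumes D: "subspace D" and N: "seminorm_on D N" and definite: "\<And>x. x \<in> D \<Longrightarrow> N x = 0 \<Longrightarrow> x = 0"
  shows "Metric_space D (seminorm_dist D N)"
proof
  show "0 \<le> seminorm_dist D N x y" for x y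
    using D by (simp add: seminorm_dist_def seminorm_on_nonneg[OF N] real_vector.subspace_diff)
  show "seminorm_dist D N x y = seminorm_dist D N y x" for x y
    by (simp add: seminorm_dist_def seminorm_on_minus_commute[OF D N])
  show "seminorm_dist D N x y = 0 \<longleftrightarrow> x = y" if "x \<in> D" "y \<in> D" for x y
    using that definite[of "x - y"] D
    by (auto simp: seminorm_dist_def seminorm_on_zero[OF D N] real_vector.subspace_diff)
  show "seminorm_dist D N x z \<le> seminorm_dist D N x y + seminorm_dist D N y z"
    if "x \<in> D" "y \<in> D" "z \<in> D" for x y z
    using that seminorm_on_triangle[OF N, of "x - y" "y - z"] D
    by (simp add: seminorm_dist_def real_vector.subspace_diff)
qed

lemma mcomplete_seminorm_dist:
  assumes "Metric_space D (seminorm_dist D N)" and complete: "complete_wrt D N"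
  shows "Metric_space.mcomplete D (seminorm_dist D N)"
proof -
  interpret M: Metric_space D "seminorm_dist D N" by fact
  show ?thesis
    unfolding M.mcomplete_def
  proof (intro allI impI)
    fix f assume "M.MCauchy f"
    then have f: "range f \<subseteq> D" "Cauchy_wrt N f"
      unfolding M.MCauchy_def Cauchy_wrt_def seminorm_dist_def by (auto simp: image_subset_iff)
    then obtain x where x: "x \<in> D" "(\<lambda>m. N (f m - x)) \<longlonglongrightarrow> 0"
      using complete by (auto simp: complete_wrt_def)
    have "limitin M.mtopology f x sequentially"
      unfolding M.limitin_metric
    proof (intro conjI allI impI)
      fix e :: real assume "e > 0"
      with x(2) have "\<forall>\<^sub>F m in sequentially. N (f m - x) < e"
        by (rule order_tendstoD(2))
      then show "\<forall>\<^sub>F m in sequentially. f m \<in> D \<and> seminorm_dist D N (f m) x < e"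
        by eventually_elim (use f x in \<open>auto simp: seminorm_dist_def\<close>)
    qed (fact x)
    then show "\<exists>x. limitin M.mtopology f x sequentially" by blast
  qed
qed

lemma (in Metric_space) Baire_sublevel_closure_interior:
  fixes g :: "'a \<Rightarrow> real"
  assumes "mcomplete" and "M \<noteq> {}"
  obtains j :: nat where "mtopology interior_of (mtopology closure_of {x\<in>M. g x \<le> real j}) \<noteq> {}"
proof -
  define G where "G j = mtopology closure_of {x\<in>M. g x \<le> real j}" for j :: nat
  have "M \<subseteq> \<Union>(range G)"
  proof
    fix x assume x: "x \<in> M"
    have "g x \<le> real (nat \<lceil>g x\<rceil>)" by linarith
    with x have "x \<in> G (nat \<lceil>g x\<rceil>)"
      unfolding G_def using closure_of_subset[of "{v\<in>M. g v \<le> real (nat \<lceil>g x\<rceil>)}" mtopology]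
      by (auto simp: topspace_mtopology)
    then show "x \<in> \<Union>(range G)" by blast
  qed
  moreover have "\<Union>(range G) \<subseteq> M"
    unfolding G_def using closure_of_subset_topspace by fastforce
  ultimately have "mtopology interior_of \<Union>(range G) = M"
    by (metis topspace_mtopology interior_of_topspace subset_antisym)
  moreover have "closedin mtopology (G j)" for j
    by (simp add: G_def)
  ultimately obtain j where "mtopology interior_of G j \<noteq> {}"
    using metric_Baire_category_alt[OF \<open>mcomplete\<close>, of "range G"] \<open>M \<noteq> {}\<close> by auto
  then show ?thesis
    using that by (simp add: G_def)
qed

lemma Baire_sublevel_dense_in_ball:
  fixes N2 :: "'v::real_vector \<Rightarrow> real"
  assumes D: "subspace D" and N1: "seminorm_on D N1"
    and definite: "\<And>x. x \<in> D \<Longrightarrow> N1 x = 0 \<Longrightarrow> x = 0" and complete: "complete_wrt D N1"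
  obtains x0 r and j :: nat where "x0 \<in> D" "r > 0"
    "\<And>y e. y \<in> D \<Longrightarrow> N1 (x0 - y) < r \<Longrightarrow> e > 0 \<Longrightarrow> \<exists>w\<in>D. N2 w \<le> real j \<and> N1 (y - w) < e"
proof -
  interpret M: Metric_space D "seminorm_dist D N1"
    using Metric_space_seminorm_dist[OF D N1 definite] .
  have "M.mcomplete"
    using mcomplete_seminorm_dist[OF M.Metric_space_axioms complete] .
  then obtain j :: nat and x0 where "x0 \<in> M.mtopology interior_of (M.mtopology closure_of {x\<in>D. N2 x \<le> real j})"
    using M.Baire_sublevel_closure_interior[of N2] real_vector.subspace_0[OF D] by blast
  then obtain U where U: "openin M.mtopology U" "x0 \<in> U" "U \<subseteq> M.mtopology closure_of {x\<in>D. N2 x \<le> real j}"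
    unfolding interior_of_def by blast
  then obtain r where r: "r > 0" "M.mball x0 r \<subseteq> U"
    using M.openin_mtopology by blast
  have x0: "x0 \<in> D"
    using U M.openin_mtopology by blast
  show ?thesis
  proof (rule that[OF x0 r(1)])
    fix y e assume y: "y \<in> D" "N1 (x0 - y) < r" and "(e::real) > 0"
    then have "y \<in> M.mball x0 r"
      using x0 by (simp add: seminorm_dist_def)
    then have "y \<in> M.mtopology closure_of {x\<in>D. N2 x \<le> real j}"
      using r U by blast
    then obtain w where "w \<in> {x\<in>D. N2 x \<le> real j}" "w \<in> M.mball y e"
      unfolding M.metric_closure_of using \<open>e > 0\<close> by blast
    then show "\<exists>w\<in>D. N2 w \<le> real j \<and> N1 (y - w) < e"
      using y by (auto simp: seminorm_dist_def)
  qed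
qed

lemma Baire_sublevel_dense_near_zero:
  fixes N2 :: "'v::real_vector \<Rightarrow> real"
  assumes D: "subspace D" and N1: "seminorm_on D N1"
    and definite: "\<And>x. x \<in> D \<Longrightarrow> N1 x = 0 \<Longrightarrow> x = 0" and complete: "complete_wrt D N1"
    and N2: "seminorm_on D N2"
  obtains r and j :: nat where "r > 0"
    "\<And>z e. z \<in> D \<Longrightarrow> N1 z < r \<Longrightarrow> e > 0 \<Longrightarrow> \<exists>w\<in>D. N2 w \<le> real j \<and> N1 (z - w) < e"
proof -
  obtain x0 r and j :: nat where x0: "x0 \<in> D" and r: "r > 0"
    and near_x0: "\<And>y e. y \<in> D \<Longrightarrow> N1 (x0 - y) < r \<Longrightarrow> e > 0 \<Longrightarrow> \<exists>w\<in>D. N2 w \<le> real j \<and> N1 (y - w) < e"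
    using Baire_sublevel_dense_in_ball[OF D N1 definite complete, of N2] by blast
  \<comment> \<open>approximate both \<open>x0\<close> and \<open>x0 - z\<close>, and subtract\<close>
  have "\<exists>w\<in>D. N2 w \<le> real (2 * j) \<and> N1 (z - w) < e"
    if z: "z \<in> D" "N1 z < r" and e: "e > 0" for z e
  proof -
    have "x0 - z \<in> D"
      using x0 z D by (simp add: real_vector.subspace_diff)
    then obtain w1 where w1: "w1 \<in> D" "N2 w1 \<le> real j" "N1 ((x0 - z) - w1) < e/2"
      using near_x0[of "x0 - z" "e/2"] z e by auto
    obtain w2 where w2: "w2 \<in> D" "N2 w2 \<le> real j" "N1 (x0 - w2) < e/2"
      using near_x0[OF x0, of "e/2"] e r seminorm_on_zero[OF D N1] by auto
    have "N1 ((x0 - w2) - ((x0 - z) - w1)) \<le> N1 (x0 - w2) + N1 ((x0 - z) - w1)"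
      using x0 z w1 w2 \<open>x0 - z \<in> D\<close> D by (intro seminorm_on_diff_le[OF D N1] real_vector.subspace_diff)
    moreover have "(x0 - w2) - ((x0 - z) - w1) = z - (w2 - w1)"
      by (simp add: algebra_simps)
    ultimately have "N1 (z - (w2 - w1)) \<le> N1 (x0 - w2) + N1 ((x0 - z) - w1)"
      by simp
    moreover have "N2 (w2 - w1) \<le> real (2 * j)"
      using seminorm_on_diff_le[OF D N2 w2(1) w1(1)] w1 w2 by simp
    ultimately show ?thesis
      using w1 w2 D by (intro bexI[of _ "w2 - w1"]) (auto simp: real_vector.subspace_diff)
  qed
  then show ?thesis
    using that r by blast
qed

lemma approx_near_zero_rescaled:
  fixes N2 :: "'v::real_vector \<Rightarrow> real"
  assumes D: "subspace D" and N1: "seminorm_on D N1" and N2: "seminorm_on D N2" and "r > 0"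
    and near_0: "\<And>z e. z \<in> D \<Longrightarrow> N1 z < r \<Longrightarrow> e > 0 \<Longrightarrow> \<exists>w\<in>D. N2 w \<le> B \<and> N1 (z - w) < e"
    and z: "z \<in> D" and Nz: "N1 z > 0" and "e > 0"
  shows "\<exists>w\<in>D. N2 w \<le> (2 * B / r) * N1 z \<and> N1 (z - w) < e"
proof -
  define t where "t = r / (2 * N1 z)"
  have t: "t > 0"
    using \<open>r > 0\<close> Nz by (simp add: t_def)
  have tz: "t *\<^sub>R z \<in> D" "N1 (t *\<^sub>R z) < r"
    using seminorm_on_scaleR[OF N1 z, of t] t Nz \<open>r > 0\<close> z D
    by (simp_all add: t_def real_vector.subspace_scale)
  obtain w where w: "w \<in> D" "N2 w \<le> B" "N1 (t *\<^sub>R z - w) < e * t"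
    using near_0[OF tz, of "e * t"] \<open>e > 0\<close> t by auto
  have "z - (1/t) *\<^sub>R w = (1/t) *\<^sub>R (t *\<^sub>R z - w)"
    using t by (simp add: scaleR_right_diff_distrib)
  moreover have "t *\<^sub>R z - w \<in> D"
    using tz w D by (simp add: real_vector.subspace_diff)
  ultimately have "N1 (z - (1/t) *\<^sub>R w) = (1/t) * N1 (t *\<^sub>R z - w)"
    using t by (simp add: seminorm_on_scaleR[OF N1])
  also have "\<dots> < (1/t) * (e * t)"
    using w t by (intro mult_strict_left_mono) auto
  also have "\<dots> = e"
    using t by simp
  finally have close: "N1 (z - (1/t) *\<^sub>R w) < e" .
  have "N2 ((1/t) *\<^sub>R w) = (1/t) * N2 w"
    using t seminorm_on_scaleR[OF N2 w(1)] by simp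
  also have "\<dots> \<le> (1/t) * B"
    using w t by (intro mult_left_mono) auto
  also have "\<dots> = (2 * B / r) * N1 z"
    using Nz \<open>r > 0\<close> by (simp add: t_def field_simps)
  finally show ?thesis
    using close w D by (auto intro: real_vector.subspace_scale)
qed

lemma complete_norm_approx_bounded:
  fixes N2 :: "'v::real_vector \<Rightarrow> real"
  assumes D: "subspace D" and N1: "seminorm_on D N1"
    and definite: "\<And>x. x \<in> D \<Longrightarrow> N1 x = 0 \<Longrightarrow> x = 0" and complete: "complete_wrt D N1"
    and N2: "seminorm_on D N2"
  obtains K where "K \<ge> 0" "\<And>z e. z \<in> D \<Longrightarrow> e > 0 \<Longrightarrow> \<exists>w\<in>D. N2 w \<le> K * N1 z \<and> N1 (z - w) < e"
proof -
  obtain r and j :: nat where r: "r > 0"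
    and near_0: "\<And>z e. z \<in> D \<Longrightarrow> N1 z < r \<Longrightarrow> e > 0 \<Longrightarrow> \<exists>w\<in>D. N2 w \<le> real j \<and> N1 (z - w) < e"
    using Baire_sublevel_dense_near_zero[OF D N1 definite complete N2] by blast
  define K where "K = 2 * real j / r"
  have "\<exists>w\<in>D. N2 w \<le> K * N1 z \<and> N1 (z - w) < e" if z: "z \<in> D" and e: "e > 0" for z e
  proof (cases "N1 z = 0")
    case True
    then show ?thesis
      using definite[OF z] e real_vector.subspace_0[OF D] seminorm_on_zero[OF D N1] seminorm_on_zero[OF D N2]
      by (intro bexI[of _ 0]) auto
  next
    case False
    then have "N1 z > 0"
      using seminorm_on_nonneg[OF N1 z] by linarith
    then show ?thesis
      unfolding K_def using approx_near_zero_rescaled[OF D N1 N2 r near_0 z _ e] by blast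
  qed
  moreover have "K \<ge> 0"
    using r by (simp add: K_def)
  ultimately show ?thesis
    using that by blast
qed

lemma approx_geometric_sequence:
  fixes N2 :: "'v::real_vector \<Rightarrow> real"
  assumes D: "subspace D" and N1: "seminorm_on D N1"
    and approx: "\<And>z e. z \<in> D \<Longrightarrow> e > 0 \<Longrightarrow> \<exists>w\<in>D. N2 w \<le> K * N1 z \<and> N1 (z - w) < e"
    and "K \<ge> 0" and z: "z \<in> D" and Nz: "N1 z > 0"
  obtains ws where "\<And>i. ws i \<in> D" "\<And>i. N2 (ws i) \<le> K * N1 z * (1/2)^i"
    "\<And>m. N1 (z - (\<Sum>i<m. ws i)) \<le> N1 z * (1/2)^m"
proof -
  obtain W where W: "\<And>u e. u \<in> D \<Longrightarrow> e > 0 \<Longrightarrow> W u e \<in> D \<and> N2 (W u e) \<le> K * N1 u \<and> N1 (u - W u e) < e"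
    using approx by metis
  define eps where "eps i = N1 z * (1/2)^Suc i" for i :: nat
  have eps: "eps i > 0" for i
    using Nz by (simp add: eps_def)
  \<comment> \<open>the remainders left after subtracting the first \<open>i\<close> approximations\<close>
  define zs where "zs = rec_nat z (\<lambda>i u. u - W u (eps i))"
  have zs_Suc: "zs (Suc i) = zs i - W (zs i) (eps i)" for i
    by (simp add: zs_def)
  have zs: "zs i \<in> D \<and> N1 (zs i) \<le> N1 z * (1/2)^i" for i
  proof (induction i)
    case 0
    then show ?case using z by (simp add: zs_def)
  next
    case (Suc i)
    then have "W (zs i) (eps i) \<in> D" "N1 (zs i - W (zs i) (eps i)) < eps i"
      using W eps by blast+
    then show ?case
      using Suc D by (simp add: zs_Suc eps_def real_vector.subspace_diff less_imp_le)
  qed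
  define ws where "ws i = W (zs i) (eps i)" for i
  show ?thesis
  proof
    show "ws i \<in> D" for i
      using W zs eps by (simp add: ws_def)
    show "N2 (ws i) \<le> K * N1 z * (1/2)^i" for i
    proof -
      have "N2 (ws i) \<le> K * N1 (zs i)"
        using W zs eps by (simp add: ws_def)
      also have "\<dots> \<le> K * (N1 z * (1/2)^i)"
        using zs \<open>K \<ge> 0\<close> by (intro mult_left_mono) auto
      finally show ?thesis by simp
    qed
    have "z - (\<Sum>i<m. ws i) = zs m" for m
      by (induction m) (simp_all add: zs_def ws_def)
    then show "N1 (z - (\<Sum>i<m. ws i)) \<le> N1 z * (1/2)^m" for m
      using zs by simp
  qed
qed

lemma sum_half_powers_atLeastLessThan:
  assumes "k \<le> m"
  shows "(\<Sum>i\<in>{k..<m}. (1/2::real)^i) = 2 * (1/2)^k - 2 * (1/2)^m"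
  using assms by (induction m rule: dec_induct) (simp_all add: sum.atLeastLessThan_Suc)

lemma seminorm_geometric_partial_sums:
  assumes D: "subspace D" and N: "seminorm_on D N"
    and ws: "\<And>i. ws i \<in> D" and bound: "\<And>i. N (ws i) \<le> c * (1/2)^i"
  shows seminorm_geometric_tail: "k \<le> m \<Longrightarrow> N ((\<Sum>i<m. ws i) - (\<Sum>i<k. ws i)) \<le> 2 * c * (1/2)^k"
    and Cauchy_wrt_geometric_sums: "Cauchy_wrt N (\<lambda>m. \<Sum>i<m. ws i)"
proof -
  have c: "c \<ge> 0"
    using seminorm_on_nonneg[OF N ws, of 0] bound[of 0] by simp
  show tail: "N ((\<Sum>i<m. ws i) - (\<Sum>i<k. ws i)) \<le> 2 * c * (1/2)^k" if "k \<le> m" for k m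
  proof -
    have "(\<Sum>i<m. ws i) - (\<Sum>i<k. ws i) = (\<Sum>i\<in>{k..<m}. ws i)"
      using sum.atLeastLessThan_concat[OF _ that, of 0 ws] by (simp add: lessThan_atLeast0) (metis add_diff_cancel_left')
    then have "N ((\<Sum>i<m. ws i) - (\<Sum>i<k. ws i)) \<le> (\<Sum>i\<in>{k..<m}. N (ws i))"
      using seminorm_on_sum_le[OF D N, of "{k..<m}" ws] ws by simp
    also have "\<dots> \<le> (\<Sum>i\<in>{k..<m}. c * (1/2)^i)"
      by (intro sum_mono bound)
    also have "\<dots> = c * (2 * (1/2)^k - 2 * (1/2)^m)"
      by (simp add: sum_distrib_left[symmetric] sum_half_powers_atLeastLessThan[OF that])
    also have "\<dots> \<le> 2 * c * (1/2)^k"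
      using c by (simp add: algebra_simps)
    finally show ?thesis .
  qed
  show "Cauchy_wrt N (\<lambda>m. \<Sum>i<m. ws i)"
    unfolding Cauchy_wrt_def
  proof (intro allI impI)
    fix e :: real assume "e > 0"
    have "(\<lambda>k. 2 * c * (1/2::real)^k) \<longlonglongrightarrow> 2 * c * 0"
      by (intro tendsto_mult_left LIMSEQ_power_zero) simp
    then have "\<forall>\<^sub>F k in sequentially. 2 * c * (1/2::real)^k < e"
      using \<open>e > 0\<close> by (intro order_tendstoD(2)) auto
    then obtain M where M: "\<And>k. k \<ge> M \<Longrightarrow> 2 * c * (1/2::real)^k < e"
      by (auto simp: eventually_sequentially)
    have "N ((\<Sum>i<m. ws i) - (\<Sum>i<k. ws i)) < e" if "m \<ge> M" "k \<ge> M" for m k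
    proof (cases "k \<le> m")
      case True
      then show ?thesis using tail M that by (meson le_less_trans)
    next
      case False
      then have "N ((\<Sum>i<k. ws i) - (\<Sum>i<m. ws i)) < e"
        using tail M that by (meson le_less_trans nle_le)
      then show ?thesis
        using seminorm_on_minus_commute[OF D N] real_vector.subspace_sum[OF D] ws by metis
    qed
    then show "\<exists>M. \<forall>m\<ge>M. \<forall>k\<ge>M. N ((\<Sum>i<m. ws i) - (\<Sum>i<k. ws i)) < e"
      by blast
  qed
qed

lemma dominated_limits_eq:
  assumes D: "subspace D" and N1: "seminorm_on D N1"
    and definite: "\<And>x. x \<in> D \<Longrightarrow> N1 x = 0 \<Longrightarrow> x = 0"
    and dominated: "\<And>x. x \<in> D \<Longrightarrow> N1 x \<le> C * N2 x"
    and z: "z \<in> D" and w: "w \<in> D" and S: "\<And>m. S m \<in> D"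
    and lim1: "(\<lambda>m. N1 (z - S m)) \<longlonglongrightarrow> 0" and lim2: "(\<lambda>m. N2 (S m - w)) \<longlonglongrightarrow> 0"
  shows "z = w"
proof -
  have "N1 (z - w) \<le> N1 (z - S m) + C * N2 (S m - w)" for m
  proof -
    have "N1 (z - w) \<le> N1 (z - S m) + N1 (S m - w)"
      using seminorm_on_triangle[OF N1, of "z - S m" "S m - w"] z S w D
      by (simp add: real_vector.subspace_diff)
    then show ?thesis
      using dominated[of "S m - w"] S w D by (simp add: real_vector.subspace_diff)
  qed
  moreover have "(\<lambda>m. N1 (z - S m) + C * N2 (S m - w)) \<longlonglongrightarrow> 0 + C * 0"
    by (intro tendsto_add tendsto_mult_left lim1 lim2)
  ultimately have "N1 (z - w) \<le> 0"
    using LIMSEQ_le_const[of _ 0 "N1 (z - w)"] by auto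
  then show "z = w"
    using definite[of "z - w"] seminorm_on_nonneg[OF N1, of "z - w"] z w D
    by (simp add: real_vector.subspace_diff)
qed

lemma approx_bound_imp_reverse_bound:
  assumes D: "subspace D" and N1: "seminorm_on D N1"
    and definite: "\<And>x. x \<in> D \<Longrightarrow> N1 x = 0 \<Longrightarrow> x = 0"
    and N2: "seminorm_on D N2" and complete2: "complete_wrt D N2"
    and dominated: "\<And>x. x \<in> D \<Longrightarrow> N1 x \<le> C * N2 x"
    and approx: "\<And>z e. z \<in> D \<Longrightarrow> e > 0 \<Longrightarrow> \<exists>w\<in>D. N2 w \<le> K * N1 z \<and> N1 (z - w) < e"
    and K: "K \<ge> 0" and z: "z \<in> D"
  shows "N2 z \<le> 2 * K * N1 z"
proof (cases "N1 z = 0")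
  case True
  then show ?thesis
    using definite[OF z] seminorm_on_zero[OF D N1] seminorm_on_zero[OF D N2] by simp
next
  case False
  then have Nz: "N1 z > 0"
    using seminorm_on_nonneg[OF N1 z] by linarith
  obtain ws where ws: "\<And>i. ws i \<in> D" and ws_bound: "\<And>i. N2 (ws i) \<le> K * N1 z * (1/2)^i"
    and remainder: "\<And>m. N1 (z - (\<Sum>i<m. ws i)) \<le> N1 z * (1/2)^m"
    using approx_geometric_sequence[OF D N1 approx K z Nz] by blast
  define S where "S m = (\<Sum>i<m. ws i)" for m
  have S: "S m \<in> D" for m
    unfolding S_def using ws D by (intro real_vector.subspace_sum) auto
  have "Cauchy_wrt N2 S"
    unfolding S_def by (rule Cauchy_wrt_geometric_sums[OF D N2 ws ws_bound])
  then obtain w where w: "w \<in> D" and lim: "(\<lambda>m. N2 (S m - w)) \<longlonglongrightarrow> 0"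
    using complete2 S unfolding complete_wrt_def by blast
  have "N2 w - 2 * K * N1 z \<le> N2 (S m - w)" for m
  proof -
    have "N2 w \<le> N2 (S m) + N2 (S m - w)"
      using seminorm_on_diff_le[OF D N2, of "S m" "S m - w"] S w D
      by (simp add: real_vector.subspace_diff)
    moreover have "N2 (S m) \<le> 2 * K * N1 z"
      using seminorm_geometric_tail[OF D N2 ws ws_bound, of 0 m] by (simp add: S_def)
    ultimately show ?thesis
      by linarith
  qed
  then have "N2 w \<le> 2 * K * N1 z"
    using LIMSEQ_le_const[OF lim] by fastforce
  moreover have "(\<lambda>m. N1 (z - S m)) \<longlonglongrightarrow> 0"
  proof (rule tendsto_sandwich[of "\<lambda>_. 0" _ _ "\<lambda>m. N1 z * (1/2)^m"])
    show "\<forall>\<^sub>F m in sequentially. 0 \<le> N1 (z - S m)" "\<forall>\<^sub>F m in sequentially. N1 (z - S m) \<le> N1 z * (1/2)^m"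
      using remainder seminorm_on_nonneg[OF N1] z S D by (simp_all add: S_def real_vector.subspace_diff)
    show "(\<lambda>m. N1 z * (1/2::real)^m) \<longlonglongrightarrow> 0"
      using tendsto_mult_left[OF LIMSEQ_power_zero[of "1/2::real"], of "N1 z"] by simp
  qed simp
  then have "z = w"
    using dominated_limits_eq[OF D N1 definite dominated z w S _ lim] by blast
  ultimately show ?thesis
    by simp
qed

theorem complete_norms_reverse_bound:
  assumes D: "subspace D" and N1: "seminorm_on D N1"
    and definite: "\<And>x. x \<in> D \<Longrightarrow> N1 x = 0 \<Longrightarrow> x = 0" and complete1: "complete_wrt D N1"
    and N2: "seminorm_on D N2" and complete2: "complete_wrt D N2"
    and dominated: "\<And>x. x \<in> D \<Longrightarrow> N1 x \<le> C * N2 x"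
  obtains K where "\<And>x. x \<in> D \<Longrightarrow> N2 x \<le> K * N1 x"
proof -
  obtain K where "K \<ge> 0"
    and approx: "\<And>z e. z \<in> D \<Longrightarrow> e > 0 \<Longrightarrow> \<exists>w\<in>D. N2 w \<le> K * N1 z \<and> N1 (z - w) < e"
    using complete_norm_approx_bounded[OF D N1 definite complete1 N2] by blast
  then show ?thesis
    using approx_bound_imp_reverse_bound[OF D N1 definite N2 complete2 dominated approx] that by blast
qed

section \<open>Product spaces and graph norms\<close>

lemma csubspace_imp_subspace: "csubspace S \<Longrightarrow> subspace S"
  by (auto simp: csubspace_def subspace_def scaleC_of_real[symmetric])

lemma lin_opD:
  assumes "lin_op Y Z D f"
  shows lin_op_subspace: "subspace D"
    and lin_op_domain: "D \<subseteq> Y"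
    and lin_op_image: "x \<in> D \<Longrightarrow> f x \<in> Z"
    and lin_op_add: "x \<in> D \<Longrightarrow> y \<in> D \<Longrightarrow> f (x + y) = f x + f y"
    and lin_op_scaleR: "x \<in> D \<Longrightarrow> f (c *\<^sub>R x) = c *\<^sub>R f x"
  using assms csubspace_imp_subspace
  by (auto simp: lin_op_def scaleC_of_real[symmetric])

lemma lin_op_diff:
  assumes "lin_op Y Z D f" "x \<in> D" "y \<in> D"
  shows "f (x - y) = f x - f y"
  using lin_op_add[OF assms(1,2), of "(-1) *\<^sub>R y"] lin_op_scaleR[OF assms(1,3), of "-1"]
    real_vector.subspace_neg[OF lin_op_subspace[OF assms(1)] assms(3)]
  by simp

lemma rel_bounded_gen_refl: "rel_bounded_gen norm norm D f D f"
  unfolding rel_bounded_gen_def by (intro conjI exI[of _ 0] exI[of _ 1]) auto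

lemma rel_bounded_gen_uniform:
  assumes "finite I" and "\<And>p. p \<in> I \<Longrightarrow> rel_bounded_gen norm norm (Df p) (f p) (Dg p) (g p)"
  obtains a b where "a \<ge> 0" "b \<ge> 0"
    "\<And>p x. p \<in> I \<Longrightarrow> x \<in> Dg p \<Longrightarrow> norm (f p x) \<le> a * norm x + b * norm (g p x)"
proof -
  obtain \<alpha> \<beta> where \<alpha>\<beta>: "\<And>p. p \<in> I \<Longrightarrow> \<alpha> p \<ge> 0 \<and> \<beta> p \<ge> 0 \<and>
      (\<forall>x\<in>Dg p. norm (f p x) \<le> \<alpha> p * norm x + \<beta> p * norm (g p x))"
    using assms(2) unfolding rel_bounded_gen_def by metis
  show ?thesis
  proof
    show "sum \<alpha> I \<ge> 0" "sum \<beta> I \<ge> 0"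
      using \<alpha>\<beta> by (auto intro: sum_nonneg)
    fix p x assume p: "p \<in> I" and x: "x \<in> Dg p"
    have "\<alpha> p \<le> sum \<alpha> I" "\<beta> p \<le> sum \<beta> I"
      using \<alpha>\<beta> p assms(1) by (auto intro: member_le_sum)
    then show "norm (f p x) \<le> sum \<alpha> I * norm x + sum \<beta> I * norm (g p x)"
      using \<alpha>\<beta>[OF p] x by (smt (verit) mult_right_mono norm_ge_zero)
  qed
qed

lemma closed_op_limit:
  assumes "closed_op D f" "\<And>m. u m \<in> D" "u \<longlonglongrightarrow> a" "(\<lambda>m. f (u m)) \<longlonglongrightarrow> b"
  shows "a \<in> D" "f a = b"
proof -
  have "(a, b) \<in> {(x, f x) | x. x \<in> D}"
    using assms(1) unfolding closed_op_def
    by (rule closed_sequentially) (use assms(2-4) in \<open>auto intro: tendsto_Pair\<close>)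
  then show "a \<in> D" "f a = b" by auto
qed

lemma convergent_if_dominated_by_Cauchy_wrt:
  fixes g :: "nat \<Rightarrow> 'b::banach"
  assumes "Cauchy_wrt N f" and "\<And>m m'. norm (g m - g m') \<le> N (f m - f m')"
  shows "convergent g"
proof -
  have "Cauchy g"
    unfolding Cauchy_def dist_norm
    using assms unfolding Cauchy_wrt_def by (meson le_less_trans)
  then show ?thesis
    by (simp add: Cauchy_convergent_iff)
qed

lemma PN_nonneg: "0 \<le> PN k x"
  by (simp add: PN_def sum_nonneg)

lemma norm_le_PN: "i \<in> {1..k} \<Longrightarrow> norm (x i) \<le> PN k x"
  unfolding PN_def by (rule member_le_sum) auto

lemma PN_triangle: "PN k (x + y) \<le> PN k x + PN k y"
  unfolding PN_def by (simp add: sum.distrib[symmetric] sum_mono norm_triangle_ineq)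

lemma PN_scaleR: "PN k (c *\<^sub>R x) = \<bar>c\<bar> * PN k x"
  by (simp add: PN_def sum_distrib_left)

lemma PN_tendsto_zero:
  fixes f :: "nat \<Rightarrow> nat \<Rightarrow> 'a::real_normed_vector"
  assumes "\<And>i. i \<in> {1..k} \<Longrightarrow> (\<lambda>m. f m i) \<longlonglongrightarrow> x i"
  shows "(\<lambda>m. PN k (f m - x)) \<longlonglongrightarrow> 0"
proof -
  have "(\<lambda>m. \<Sum>i=1..k. norm (f m i - x i)) \<longlonglongrightarrow> (\<Sum>i=1..k. 0)"
    using assms by (intro tendsto_sum tendsto_norm_zero) (simp add: LIM_zero)
  then show ?thesis
    by (simp add: PN_def)
qed

lemma subspace_PS:
  assumes "\<And>i. i \<in> {1..k} \<Longrightarrow> subspace (X i)"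
  shows "subspace (PS X k)"
  using assms unfolding subspace_def PS_def by auto

definition graph_norm :: "nat \<Rightarrow> ((nat \<Rightarrow> 'a) \<Rightarrow> nat \<Rightarrow> 'a) \<Rightarrow> (nat \<Rightarrow> 'a::real_normed_vector) \<Rightarrow> real" where
  "graph_norm k L x = PN k x + PN k (L x)"

\<comment> \<open>Zero outside \<open>{1..k}\<close>, like \<open>BA\<close>, so that it is additive on \<open>BD DA k\<close>.\<close>
definition diag_op :: "(nat \<Rightarrow> nat \<Rightarrow> 'a \<Rightarrow> 'a::zero) \<Rightarrow> nat \<Rightarrow> (nat \<Rightarrow> 'a) \<Rightarrow> nat \<Rightarrow> 'a" where
  "diag_op A k x i = (if i \<in> {1..k} then A i i (x i) else 0)"

lemma seminorm_on_graph_norm: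
  assumes "\<And>x y. x \<in> D \<Longrightarrow> y \<in> D \<Longrightarrow> L (x + y) = L x + L y"
    and "\<And>c x. x \<in> D \<Longrightarrow> L (c *\<^sub>R x) = c *\<^sub>R L x"
  shows "seminorm_on D (graph_norm k L)"
  unfolding seminorm_on_def graph_norm_def
proof (intro conjI ballI allI)
  fix x y assume "x \<in> D" "y \<in> D"
  then show "PN k (x + y) + PN k (L (x + y)) \<le> PN k x + PN k (L x) + (PN k y + PN k (L y))"
    using PN_triangle[of k x y] PN_triangle[of k "L x" "L y"] assms(1) by simp
qed (simp_all add: PN_nonneg PN_scaleR assms(2) distrib_left)

lemma graph_norm_eq_0:
  assumes "x \<in> PS X k" "graph_norm k L x = 0"
  shows "x = 0"
proof
  fix i
  have "PN k x = 0"
    using assms(2) PN_nonneg[of k x] PN_nonneg[of k "L x"] by (simp add: graph_norm_def)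
  then have "i \<in> {1..k} \<Longrightarrow> x i = 0"
    using norm_le_PN[of i k x] by simp
  then show "x i = 0 i"
    using assms(1) by (cases "i \<in> {1..k}") (auto simp: PS_def)
qed

lemma graph_norm_Cauchy_limits:
  fixes f :: "nat \<Rightarrow> nat \<Rightarrow> 'a::banach"
  assumes Cauchy: "Cauchy_wrt (graph_norm k L) f"
    and L_diff: "\<And>m m'. L (f m - f m') = L (f m) - L (f m')"
  obtains x y where "x \<in> PS (\<lambda>_. UNIV) k" "y \<in> PS (\<lambda>_. UNIV) k"
    "\<And>i. i \<in> {1..k} \<Longrightarrow> (\<lambda>m. f m i) \<longlonglongrightarrow> x i" "\<And>i. i \<in> {1..k} \<Longrightarrow> (\<lambda>m. L (f m) i) \<longlonglongrightarrow> y i"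
proof -
  have "convergent (\<lambda>m. f m i)" if i: "i \<in> {1..k}" for i
  proof (rule convergent_if_dominated_by_Cauchy_wrt[OF Cauchy])
    show "norm (f m i - f m' i) \<le> graph_norm k L (f m - f m')" for m m'
      using norm_le_PN[OF i, of "f m - f m'"] PN_nonneg[of k "L (f m - f m')"]
      by (simp add: graph_norm_def)
  qed
  moreover have "convergent (\<lambda>m. L (f m) i)" if i: "i \<in> {1..k}" for i
  proof (rule convergent_if_dominated_by_Cauchy_wrt[OF Cauchy])
    show "norm (L (f m) i - L (f m') i) \<le> graph_norm k L (f m - f m')" for m m'
      using norm_le_PN[OF i, of "L (f m - f m')"] PN_nonneg[of k "f m - f m'"]
      by (simp add: graph_norm_def L_diff)
  qed
  ultimately show ?thesis
    by (intro that[of "\<lambda>i. if i \<in> {1..k} then lim (\<lambda>m. f m i) else 0"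
          "\<lambda>i. if i \<in> {1..k} then lim (\<lambda>m. L (f m) i) else 0"])
      (auto simp: PS_def convergent_LIMSEQ_iff)
qed

lemma graph_norm_tendsto_zero:
  fixes f :: "nat \<Rightarrow> nat \<Rightarrow> 'a::real_normed_vector"
  assumes "\<And>i. i \<in> {1..k} \<Longrightarrow> (\<lambda>m. f m i) \<longlonglongrightarrow> x i"
    and "\<And>i. i \<in> {1..k} \<Longrightarrow> (\<lambda>m. L (f m) i) \<longlonglongrightarrow> L x i"
    and "\<And>m. L (f m - x) = L (f m) - L x"
  shows "(\<lambda>m. graph_norm k L (f m - x)) \<longlonglongrightarrow> 0"
  using tendsto_add[OF PN_tendsto_zero[OF assms(1)] PN_tendsto_zero[of k "\<lambda>m. L (f m)" "L x"]] assms(2,3)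
  by (simp add: graph_norm_def)

section \<open>Closed operator matrices\<close>

locale closed_operator_matrix =
  fixes X :: "nat \<Rightarrow> 'a::{complex_normed_vector,banach} set"
    and DA :: "nat \<Rightarrow> nat \<Rightarrow> 'a set" and A :: "nat \<Rightarrow> nat \<Rightarrow> 'a \<Rightarrow> 'a" and k :: nat
  assumes banach: "\<And>i. i \<in> {1..k} \<Longrightarrow> banach_subspace (X i)"
    and lin: "\<And>i j. i \<in> {1..k} \<Longrightarrow> j \<in> {1..k} \<Longrightarrow> lin_op (X j) (X i) (DA i j) (A i j)"
    and diag_closed: "\<And>i. i \<in> {1..k} \<Longrightarrow> closed_op (DA i i) (A i i)"
    and off_diag_bounded: "\<And>i j. i \<in> {1..k} \<Longrightarrow> j \<in> {1..k} \<Longrightarrow> i \<noteq> j \<Longrightarrow>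
      rel_bounded_gen norm norm (DA i j) (A i j) (DA j j) (A j j)"
    and matrix_closed: "block_closed X DA A k"
begin

lemma entries_rel_bounded:
  "i \<in> {1..k} \<Longrightarrow> j \<in> {1..k} \<Longrightarrow> rel_bounded_gen norm norm (DA i j) (A i j) (DA j j) (A j j)"
  by (cases "i = j") (auto simp: rel_bounded_gen_refl off_diag_bounded)

lemma BD_component:
  assumes "x \<in> BD DA k" "i \<in> {1..k}" "j \<in> {1..k}"
  shows "x j \<in> DA i j"
proof -
  have "DA j j \<subseteq> DA i j"
    using entries_rel_bounded[OF assms(2,3)] by (simp add: rel_bounded_gen_def)
  moreover have "x j \<in> DA j j"
    using assms(1,3) by (simp add: BD_def PS_def)
  ultimately show ?thesis by blast
qed

lemma BD_subset_PS: "BD DA k \<subseteq> PS X k"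
  using lin_op_domain[OF lin] by (fastforce simp: BD_def PS_def)

lemma subspace_BD: "subspace (BD DA k)"
  unfolding BD_def using lin_op_subspace[OF lin] by (intro subspace_PS) auto

lemma BA_add: "x \<in> BD DA k \<Longrightarrow> y \<in> BD DA k \<Longrightarrow> BA A k (x + y) = BA A k x + BA A k y"
  by (auto simp: fun_eq_iff BA_def lin_op_add[OF lin] BD_component sum.distrib)

lemma BA_scaleR: "x \<in> BD DA k \<Longrightarrow> BA A k (c *\<^sub>R x) = c *\<^sub>R BA A k x"
  by (auto simp: fun_eq_iff BA_def lin_op_scaleR[OF lin] BD_component scaleR_sum_right)

lemma BA_diff: "x \<in> BD DA k \<Longrightarrow> y \<in> BD DA k \<Longrightarrow> BA A k (x - y) = BA A k x - BA A k y"
  by (auto simp: fun_eq_iff BA_def lin_op_diff[OF lin] BD_component sum_subtractf)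

lemma diag_op_add: "x \<in> BD DA k \<Longrightarrow> y \<in> BD DA k \<Longrightarrow> diag_op A k (x + y) = diag_op A k x + diag_op A k y"
  by (auto simp: fun_eq_iff diag_op_def lin_op_add[OF lin] BD_component)

lemma diag_op_scaleR: "x \<in> BD DA k \<Longrightarrow> diag_op A k (c *\<^sub>R x) = c *\<^sub>R diag_op A k x"
  by (auto simp: fun_eq_iff diag_op_def lin_op_scaleR[OF lin] BD_component)

lemma diag_op_diff: "x \<in> BD DA k \<Longrightarrow> y \<in> BD DA k \<Longrightarrow> diag_op A k (x - y) = diag_op A k x - diag_op A k y"
  by (auto simp: fun_eq_iff diag_op_def lin_op_diff[OF lin] BD_component)

lemma seminorm_on_matrix_graph_norm: "seminorm_on (BD DA k) (graph_norm k (BA A k))"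
  by (intro seminorm_on_graph_norm BA_add BA_scaleR)

lemma seminorm_on_diag_graph_norm: "seminorm_on (BD DA k) (graph_norm k (diag_op A k))"
  by (intro seminorm_on_graph_norm diag_op_add diag_op_scaleR)

lemma matrix_graph_norm_le_diag_graph_norm:
  obtains C where "\<And>x. x \<in> BD DA k \<Longrightarrow> graph_norm k (BA A k) x \<le> C * graph_norm k (diag_op A k) x"
proof -
  have "rel_bounded_gen norm norm ((\<lambda>(i, j). DA i j) p) ((\<lambda>(i, j). A i j) p) ((\<lambda>(i, j). DA j j) p) ((\<lambda>(i, j). A j j) p)"
    if "p \<in> {1..k} \<times> {1..k}" for p
    using that entries_rel_bounded by auto
  then obtain a b where "a \<ge> 0" "b \<ge> 0" and ab: "\<And>p v. p \<in> {1..k} \<times> {1..k} \<Longrightarrow> v \<in> (\<lambda>(i, j). DA j j) p \<Longrightarrow>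
      norm ((\<lambda>(i, j). A i j) p v) \<le> a * norm v + b * norm ((\<lambda>(i, j). A j j) p v)"
    using rel_bounded_gen_uniform[of "{1..k} \<times> {1..k}"] by blast
  have "graph_norm k (BA A k) x \<le> (1 + real k * (a + b)) * graph_norm k (diag_op A k) x"
    if x: "x \<in> BD DA k" for x
  proof -
    have "PN k (BA A k x) \<le> (\<Sum>i=1..k. \<Sum>j=1..k. a * norm (x j) + b * norm (diag_op A k x j))"
      unfolding PN_def
    proof (rule sum_mono)
      fix i assume i: "i \<in> {1..k}"
      have "norm (BA A k x i) \<le> (\<Sum>j=1..k. norm (A i j (x j)))"
        using i by (simp add: BA_def norm_sum)
      also have "\<dots> \<le> (\<Sum>j=1..k. a * norm (x j) + b * norm (diag_op A k x j))"
        using ab[of "(i, _)"] i x by (intro sum_mono) (auto simp: diag_op_def BD_component)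
      finally show "norm (BA A k x i) \<le> (\<Sum>j=1..k. a * norm (x j) + b * norm (diag_op A k x j))" .
    qed
    also have "\<dots> = real k * (a * PN k x + b * PN k (diag_op A k x))"
      by (simp add: PN_def sum.distrib sum_distrib_left)
    also have "\<dots> \<le> real k * (a + b) * graph_norm k (diag_op A k) x"
      using \<open>a \<ge> 0\<close> \<open>b \<ge> 0\<close> PN_nonneg[of k x] PN_nonneg[of k "diag_op A k x"]
      by (simp add: graph_norm_def algebra_simps mult_left_mono add_mono)
    finally show ?thesis
      using PN_nonneg[of k "diag_op A k x"] by (simp add: graph_norm_def algebra_simps)
  qed
  then show ?thesis
    using that by blast
qed

lemma complete_diag_graph_norm: "complete_wrt (BD DA k) (graph_norm k (diag_op A k))"
  unfolding complete_wrt_def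
proof (intro allI impI)
  fix f assume f: "range f \<subseteq> BD DA k" and Cauchy: "Cauchy_wrt (graph_norm k (diag_op A k)) f"
  obtain x y where x: "x \<in> PS (\<lambda>_. UNIV) k" and y: "y \<in> PS (\<lambda>_. UNIV) k"
    and lim_x: "\<And>i. i \<in> {1..k} \<Longrightarrow> (\<lambda>m. f m i) \<longlonglongrightarrow> x i"
    and lim_y: "\<And>i. i \<in> {1..k} \<Longrightarrow> (\<lambda>m. diag_op A k (f m) i) \<longlonglongrightarrow> y i"
    using graph_norm_Cauchy_limits[OF Cauchy] f diag_op_diff by blast
  have fm: "f m \<in> BD DA k" for m
    using f by auto
  then have fi: "f m i \<in> DA i i" if "i \<in> {1..k}" for m i
    using that by (auto simp: BD_def PS_def)
  have "x i \<in> DA i i" "A i i (x i) = y i" if i: "i \<in> {1..k}" for i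
    using closed_op_limit[OF diag_closed[OF i] fi[OF i] lim_x[OF i]] lim_y[OF i] i
    by (simp_all add: diag_op_def)
  then have "x \<in> BD DA k" and "diag_op A k x = y"
    using x y by (auto simp: BD_def PS_def diag_op_def fun_eq_iff)
  moreover have "(\<lambda>m. graph_norm k (diag_op A k) (f m - x)) \<longlonglongrightarrow> 0"
    using lim_x lim_y diag_op_diff[OF fm \<open>x \<in> BD DA k\<close>] \<open>diag_op A k x = y\<close>
    by (intro graph_norm_tendsto_zero) auto
  ultimately show "\<exists>x\<in>BD DA k. (\<lambda>m. graph_norm k (diag_op A k) (f m - x)) \<longlonglongrightarrow> 0"
    by blast
qed

lemma complete_matrix_graph_norm: "complete_wrt (BD DA k) (graph_norm k (BA A k))"
  unfolding complete_wrt_def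
proof (intro allI impI)
  fix f assume f: "range f \<subseteq> BD DA k" and Cauchy: "Cauchy_wrt (graph_norm k (BA A k)) f"
  obtain x y where x: "x \<in> PS (\<lambda>_. UNIV) k" and y: "y \<in> PS (\<lambda>_. UNIV) k"
    and lim_x: "\<And>i. i \<in> {1..k} \<Longrightarrow> (\<lambda>m. f m i) \<longlonglongrightarrow> x i"
    and lim_y: "\<And>i. i \<in> {1..k} \<Longrightarrow> (\<lambda>m. BA A k (f m) i) \<longlonglongrightarrow> y i"
    using graph_norm_Cauchy_limits[OF Cauchy] f BA_diff by blast
  have fm: "f m \<in> BD DA k" for m
    using f by auto
  have X: "subspace (X i)" "closed (X i)" if "i \<in> {1..k}" for i
    using banach[OF that] by (simp_all add: banach_subspace_def csubspace_imp_subspace)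
  have "x i \<in> X i" if i: "i \<in> {1..k}" for i
  proof (rule closed_sequentially[OF X(2)[OF i] _ lim_x[OF i]])
    show "f m i \<in> X i" for m
      using f BD_subset_PS i by (auto simp: PS_def)
  qed
  moreover have "y i \<in> X i" if i: "i \<in> {1..k}" for i
  proof (rule closed_sequentially[OF X(2)[OF i] _ lim_y[OF i]])
    show "BA A k (f m) i \<in> X i" for m
      using i BD_component[OF fm, of i] lin_op_image[OF lin]
      by (auto simp: BA_def intro!: real_vector.subspace_sum[OF X(1)[OF i]])
  qed
  ultimately have "x \<in> PS X k" "y \<in> PS X k"
    using x y by (auto simp: PS_def)
  moreover have "(\<lambda>m. PN k (\<lambda>i. f m i - x i)) \<longlonglongrightarrow> 0" "(\<lambda>m. PN k (\<lambda>i. BA A k (f m) i - y i)) \<longlonglongrightarrow> 0"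
    using PN_tendsto_zero[OF lim_x] PN_tendsto_zero[OF lim_y] by (simp_all add: fun_diff_def)
  ultimately have "x \<in> BD DA k" "BA A k x = y"
    using matrix_closed f unfolding block_closed_def by blast+
  moreover have "(\<lambda>m. graph_norm k (BA A k) (f m - x)) \<longlonglongrightarrow> 0"
    using lim_x lim_y BA_diff[OF fm \<open>x \<in> BD DA k\<close>] \<open>BA A k x = y\<close>
    by (intro graph_norm_tendsto_zero) auto
  ultimately show "\<exists>x\<in>BD DA k. (\<lambda>m. graph_norm k (BA A k) (f m - x)) \<longlonglongrightarrow> 0"
    by blast
qed

theorem diag_graph_norm_le_matrix_graph_norm:
  obtains K where "\<And>x. x \<in> BD DA k \<Longrightarrow> graph_norm k (diag_op A k) x \<le> K * graph_norm k (BA A k) x"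
proof -
  obtain C where dominated: "\<And>x. x \<in> BD DA k \<Longrightarrow> graph_norm k (BA A k) x \<le> C * graph_norm k (diag_op A k) x"
    using matrix_graph_norm_le_diag_graph_norm by blast
  have definite: "x = 0" if "x \<in> BD DA k" "graph_norm k (BA A k) x = 0" for x
    using graph_norm_eq_0 BD_subset_PS that by blast
  show ?thesis
    using complete_norms_reverse_bound[OF subspace_BD seminorm_on_matrix_graph_norm definite
        complete_matrix_graph_norm seminorm_on_diag_graph_norm complete_diag_graph_norm dominated] that
    by blast
qed

lemma row_rel_bounded:
  assumes T: "\<And>j. j \<in> {1..k} \<Longrightarrow> rel_bounded_gen norm norm (DT j) (T j) (DA j j) (A j j)"
  shows "rel_bounded_gen (PN k) norm (PS DT k) (rowT T k) (BD DA k) (BA A k)"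
proof -
  obtain a b where "a \<ge> 0" "b \<ge> 0"
    and ab: "\<And>j v. j \<in> {1..k} \<Longrightarrow> v \<in> DA j j \<Longrightarrow> norm (T j v) \<le> a * norm v + b * norm (A j j v)"
    by (rule rel_bounded_gen_uniform[of "{1..k}" DT T "\<lambda>j. DA j j" "\<lambda>j. A j j", OF _ T]) auto
  obtain K where K: "\<And>x. x \<in> BD DA k \<Longrightarrow> graph_norm k (diag_op A k) x \<le> K * graph_norm k (BA A k) x"
    using diag_graph_norm_le_matrix_graph_norm by blast
  define c where "c = max a b * max K 0"
  have "norm (rowT T k x) \<le> c * PN k x + c * PN k (BA A k x)" if x: "x \<in> BD DA k" for x
  proof -
    have "norm (rowT T k x) \<le> (\<Sum>j=1..k. a * norm (x j) + b * norm (diag_op A k x j))"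
      unfolding rowT_def using ab x
      by (intro order_trans[OF norm_sum] sum_mono) (auto simp: BD_def PS_def diag_op_def)
    also have "\<dots> = a * PN k x + b * PN k (diag_op A k x)"
      by (simp add: PN_def sum.distrib sum_distrib_left)
    also have "\<dots> \<le> max a b * graph_norm k (diag_op A k) x"
      using PN_nonneg[of k x] PN_nonneg[of k "diag_op A k x"]
      by (simp add: graph_norm_def distrib_left add_mono mult_right_mono)
    also have "\<dots> \<le> max a b * (max K 0 * graph_norm k (BA A k) x)"
      using K[OF x] \<open>a \<ge> 0\<close> PN_nonneg[of k x] PN_nonneg[of k "BA A k x"]
      by (intro mult_left_mono order_trans[OF _ mult_right_mono[of K "max K 0"]])
        (auto simp: graph_norm_def)
    finally show ?thesis
      by (simp add: c_def graph_norm_def algebra_simps)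
  qed
  moreover have "BD DA k \<subseteq> PS DT k"
    using T by (auto simp: BD_def PS_def rel_bounded_gen_def)
  moreover have "c \<ge> 0"
    using \<open>a \<ge> 0\<close> by (simp add: c_def)
  ultimately show ?thesis
    unfolding rel_bounded_gen_def by blast
qed

end

lemma block_resolventD:
  fixes DA :: "nat \<Rightarrow> nat \<Rightarrow> 'a::complex_normed_vector set" and A :: "nat \<Rightarrow> nat \<Rightarrow> 'a \<Rightarrow> 'a"
    and k :: nat and l :: complex
  defines "R \<equiv> the_inv_into (BD DA k) (\<lambda>x i. scaleC l (x i) - BA A k x i)"
  assumes l: "l \<notin> block_spec X DA A k" and y: "y \<in> PS X k"
  shows block_resolvent_in_domain: "R y \<in> BD DA k"
    and PN_block_resolvent_graph: "PN k (BA A k (R y)) \<le> cmod l * PN k (R y) + PN k y"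
proof -
  have inj: "inj_on (\<lambda>x i. scaleC l (x i) - BA A k x i) (BD DA k)"
    and onto: "(\<lambda>x i. scaleC l (x i) - BA A k x i) ` BD DA k = PS X k"
    using l by (simp_all add: block_spec_def resolvent_ok_def bij_betw_def)
  show "R y \<in> BD DA k"
    using the_inv_into_into[OF inj, of y] onto y by (simp add: R_def)
  have R_eq: "(\<lambda>i. scaleC l (R y i) - BA A k (R y) i) = y"
    using f_the_inv_into_f[OF inj, of y] onto y by (simp add: R_def)
  have "PN k (BA A k (R y)) \<le> (\<Sum>i=1..k. cmod l * norm (R y i) + norm (y i))"
    unfolding PN_def
  proof (rule sum_mono)
    fix i
    have "BA A k (R y) i = scaleC l (R y i) - y i"
      using fun_cong[OF R_eq, of i] by (simp add: algebra_simps)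
    then show "norm (BA A k (R y) i) \<le> cmod l * norm (R y i) + norm (y i)"
      using norm_triangle_ineq4[of "scaleC l (R y i)" "y i"] by (simp add: norm_scaleC)
  qed
  also have "\<dots> = cmod l * PN k (R y) + PN k y"
    by (simp add: PN_def sum.distrib sum_distrib_left)
  finally show "PN k (BA A k (R y)) \<le> cmod l * PN k (R y) + PN k y" .
qed

lemma rel_bounded_resolvent:
  fixes f :: "(nat \<Rightarrow> 'a::complex_normed_vector) \<Rightarrow> 'b::real_normed_vector"
    and DA :: "nat \<Rightarrow> nat \<Rightarrow> 'a set" and A :: "nat \<Rightarrow> nat \<Rightarrow> 'a \<Rightarrow> 'a" and k :: nat and l :: complex
  defines "R \<equiv> the_inv_into (BD DA k) (\<lambda>x i. scaleC l (x i) - BA A k x i)"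
  assumes rel_bounded: "rel_bounded_gen (PN k) norm Df f (BD DA k) (BA A k)"
    and l: "l \<notin> block_spec X DA A k"
  shows "(\<forall>y\<in>PS X k. R y \<in> Df) \<and> (\<exists>C. \<forall>y\<in>PS X k. norm (f (R y)) \<le> C * PN k y)"
proof -
  obtain \<alpha> \<beta> where "\<alpha> \<ge> 0" "\<beta> \<ge> 0" and f_bound: "\<And>x. x \<in> BD DA k \<Longrightarrow> norm (f x) \<le> \<alpha> * PN k x + \<beta> * PN k (BA A k x)"
    and "BD DA k \<subseteq> Df"
    using rel_bounded by (auto simp: rel_bounded_gen_def)
  obtain C0 where C0: "\<And>y. y \<in> PS X k \<Longrightarrow> PN k (R y) \<le> C0 * PN k y"
    using l by (auto simp: block_spec_def resolvent_ok_def R_def)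
  define C where "C = max C0 0"
  have C: "\<And>y. y \<in> PS X k \<Longrightarrow> PN k (R y) \<le> C * PN k y"
    using order_trans[OF C0 mult_right_mono[OF _ PN_nonneg]] by (simp add: C_def)
  have "norm (f (R y)) \<le> (\<alpha> * C + \<beta> * (cmod l * C + 1)) * PN k y" if y: "y \<in> PS X k" for y
  proof -
    have "norm (f (R y)) \<le> \<alpha> * PN k (R y) + \<beta> * PN k (BA A k (R y))"
      using f_bound block_resolvent_in_domain[OF l y] by (simp add: R_def)
    also have "\<dots> \<le> \<alpha> * PN k (R y) + \<beta> * (cmod l * PN k (R y) + PN k y)"
      using PN_block_resolvent_graph[OF l y] \<open>\<beta> \<ge> 0\<close> by (simp add: R_def mult_left_mono)
    also have "\<dots> \<le> \<alpha> * (C * PN k y) + \<beta> * (cmod l * (C * PN k y) + PN k y)"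
      using C[OF y] \<open>\<alpha> \<ge> 0\<close> \<open>\<beta> \<ge> 0\<close> by (intro add_mono mult_left_mono) auto
    finally show ?thesis
      by (simp add: algebra_simps)
  qed
  then show ?thesis
    using block_resolvent_in_domain[OF l] \<open>BD DA k \<subseteq> Df\<close> by (auto simp: R_def)
qed

lemma block_closed_1:
  assumes "closed_op (DA 1 1) (A 1 1)"
  shows "block_closed X DA A 1"
  unfolding block_closed_def
proof (intro allI impI, elim conjE)
  fix xs x y
  assume xs: "\<forall>m. xs m \<in> BD DA 1" and x: "x \<in> PS X 1" and y: "y \<in> PS X 1"
    and lim_x: "(\<lambda>m. PN 1 (\<lambda>i. xs m i - x i)) \<longlonglongrightarrow> 0"
    and lim_y: "(\<lambda>m. PN 1 (\<lambda>i. BA A 1 (xs m) i - y i)) \<longlonglongrightarrow> 0"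
  have "(\<lambda>m. xs m 1) \<longlonglongrightarrow> x 1" and "(\<lambda>m. A 1 1 (xs m 1)) \<longlonglongrightarrow> y 1"
    using lim_x lim_y by (simp_all add: PN_def BA_def LIM_zero_iff tendsto_norm_zero_iff)
  moreover have "xs m 1 \<in> DA 1 1" for m
    using xs by (simp add: BD_def PS_def)
  ultimately have "x 1 \<in> DA 1 1" "A 1 1 (x 1) = y 1"
    using closed_op_limit[OF assms, of "\<lambda>m. xs m 1"] by simp_all
  then show "x \<in> BD DA 1 \<and> BA A 1 x = y"
    using x y by (auto simp: BD_def PS_def BA_def fun_eq_iff)
qed

theorem lemma3p5:
  fixes X :: "nat \<Rightarrow> 'a::{complex_normed_vector,banach} set"
    and A :: "nat \<Rightarrow> nat \<Rightarrow> 'a \<Rightarrow> 'a" and DA :: "nat \<Rightarrow> nat \<Rightarrow> 'a set"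
    and T :: "nat \<Rightarrow> 'a \<Rightarrow> 'a" and DT :: "nat \<Rightarrow> 'a set"
    and n :: nat
  assumes n2: "n \<ge> 2"
    and Xb: "\<forall>i\<in>{1..n}. banach_subspace (X i)"
    and Alin: "\<forall>i\<in>{1..n}. \<forall>j\<in>{1..n}. lin_op (X j) (X i) (DA i j) (A i j)"
    and Aclosed: "\<forall>i\<in>{1..n}. closed_op (DA i i) (A i i)"
    and Arel: "\<forall>i\<in>{1..n}. \<forall>j\<in>{1..n}. i \<noteq> j \<longrightarrow>
                 rel_bounded_gen norm norm (DA i j) (A i j) (DA j j) (A j j)"
    and Tlin: "\<forall>j\<in>{1..n-1}. lin_op (X j) (X n) (DT j) (T j)"
    and Trel: "\<forall>j\<in>{1..n-1}. rel_bounded_gen norm norm (DT j) (T j) (DA j j) (A j j)"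
    and Bclosed: "\<forall>k\<in>{2..n}. block_closed X DA A k"
  shows "((\<forall>k\<in>{2..n-2}. spec (X k) (DA k k) (A k k) \<union> block_spec X DA A k \<noteq> UNIV) \<longrightarrow>
           (\<forall>l. l \<notin> spec (X (n-1)) (DA (n-1) (n-1)) (A (n-1) (n-1)) \<union> block_spec X DA A (n-1) \<longrightarrow>
              (\<forall>y\<in>PS X (n-1). the_inv_into (BD DA (n-1)) (\<lambda>x i. scaleC l (x i) - BA A (n-1) x i) y
                                  \<in> PS DT (n-1)) \<and>
              (\<exists>C. \<forall>y\<in>PS X (n-1).
                 norm (rowT T (n-1) (the_inv_into (BD DA (n-1)) (\<lambda>x i. scaleC l (x i) - BA A (n-1) x i) y))
                   \<le> C * PN (n-1) y)))
       \<and> ((\<forall>k\<in>{2..n-1}. spec (X k) (DA k k) (A k k) \<union> block_spec X DA A k \<noteq> UNIV) \<longrightarrow>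
           rel_bounded_gen (PN (n-1)) norm (PS DT (n-1)) (rowT T (n-1)) (BD DA (n-1)) (BA A (n-1)))"
proof -
  define k where "k = n - 1"
  have "{1..k} \<subseteq> {1..n}"
    by (auto simp: k_def)
  moreover have "block_closed X DA A k"
    \<comment> \<open>\<open>Bclosed\<close> does not cover \<open>k = 1\<close>, where \<open>A\<^sub>1 = A\<^sub>1\<^sub>1\<close> is closed by \<open>Aclosed\<close>\<close>
    using Bclosed Aclosed block_closed_1[of DA A X] n2 by (cases "k = 1") (auto simp: k_def)
  ultimately interpret closed_operator_matrix X DA A k
    using Xb Alin Aclosed Arel by unfold_locales auto
  have rel_bounded: "rel_bounded_gen (PN k) norm (PS DT k) (rowT T k) (BD DA k) (BA A k)"
    using Trel by (intro row_rel_bounded) (auto simp: k_def)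
  show ?thesis
    using rel_bounded_resolvent[OF rel_bounded] rel_bounded unfolding k_def by blast
qed

end
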